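(* Let $\rho$ be an $n$-qubit density matrix and define $\vec z\in\mathbb{C}^n$ by $z_i=\langle e_i|\rho|0^n\rangle$. If $\vec a\in\mathbb{C}^n$ satisfies $\|\vec a-\vec z\|_2\le\|\vec a\|_2/2$, then \[ \langle\pi_{\vec a/10}|\rho|\pi_{\vec a/10}\rangle\ge\langle0^n|\rho|0^n\rangle+\frac{\|\vec a\|_2^2}{20}. \]
   Context: For $\vec w\in\mathbb{C}^n$, $|\pi_{\vec w}\rangle=\bigotimes_{i=1}^n\frac{|0\rangle+w_i|1\rangle}{\sqrt{1+|w_i|^2}}$. $|e_i\rangle$ denotes the $n$-qubit computational basis state with $|1\rangle$ in position $i$ and $|0\rangle$ elsewhere. *)

theory Defs
  imports "HOL-Analysis.Analysis"
begin

text \<open>n-qubit operators are represented as functions nat => nat => complex,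
  meaningful on indices < 2^n.  A computational basis index x < 2^n encodes the
  bitstring whose i-th qubit (i < n) is bit i of x.  Vectors in C^n are functions
  nat => complex, meaningful on indices < n.\<close>

definition hermitian_op :: "nat \<Rightarrow> (nat \<Rightarrow> nat \<Rightarrow> complex) \<Rightarrow> bool" where
  "hermitian_op n \<rho> \<longleftrightarrow> (\<forall>i<2^n. \<forall>j<2^n. \<rho> i j = cnj (\<rho> j i))"

definition quad_form :: "nat \<Rightarrow> (nat \<Rightarrow> nat \<Rightarrow> complex) \<Rightarrow> (nat \<Rightarrow> complex) \<Rightarrow> complex" where
  "quad_form n \<rho> v = (\<Sum>i<2^n. \<Sum>j<2^n. cnj (v i) * \<rho> i j * v j)"

definition density_matrix :: "nat \<Rightarrow> (nat \<Rightarrow> nat \<Rightarrow> complex) \<Rightarrow> bool" where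
  "density_matrix n \<rho> \<longleftrightarrow> hermitian_op n \<rho>
     \<and> (\<forall>v. Im (quad_form n \<rho> v) = 0 \<and> Re (quad_form n \<rho> v) \<ge> 0)
     \<and> (\<Sum>i<2^n. \<rho> i i) = 1"

text \<open>basis index of e_i: qubit i is 1, all others 0\<close>
definition e_idx :: "nat \<Rightarrow> nat" where
  "e_idx i = 2 ^ i"

definition pi_state :: "nat \<Rightarrow> (nat \<Rightarrow> complex) \<Rightarrow> nat \<Rightarrow> complex" where
  "pi_state n w x = (\<Prod>i<n. (if bit x i then w i else 1) / complex_of_real (sqrt (1 + (cmod (w i))\<^sup>2)))"

definition vnorm :: "nat \<Rightarrow> (nat \<Rightarrow> complex) \<Rightarrow> real" where
  "vnorm n v = sqrt (\<Sum>i<n. (cmod (v i))\<^sup>2)"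

end

theory Submission
  imports Defs
begin

text \<open>Write \<open>\<pi>\<^sub>w = v\<^sub>w / \<surd>N\<close> with \<open>v\<^sub>w x = \<Prod>{w i | bit x i}\<close> and
  \<open>N = \<Prod>(1 + |w i|\<^sup>2)\<close>, and split \<open>v\<^sub>w = |0\<^sup>n\<rangle> + y + r\<close>, where \<open>y = \<Sum> w i |e\<^sub>i\<rangle>\<close> and
  \<open>r\<close> collects the basis states of Hamming weight at least two. For \<open>w = a/10\<close> and
  \<open>s = |w|\<^sup>2\<close>, the cross term \<open>2 Re \<langle>0\<^sup>n|\<rho>|y\<rangle> = Re \<langle>z, a\<rangle>/5 \<ge> |a|\<^sup>2/10 = 10 s\<close> gives a
  first-order gain, while \<open>\<langle>r|\<rho>|r\<rangle> \<le> |r|\<^sup>2 = N - 1 - s \<le> s\<^sup>2\<close> and the normalisation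
  \<open>N \<le> 1 + s + s\<^sup>2\<close> only cost higher order. Smallness of \<open>s\<close> follows from
  \<open>|a| \<le> 2|z|\<close> and \<open>|z|\<^sup>2 \<le> \<langle>0\<^sup>n|\<rho>|0\<^sup>n\<rangle> \<le> 1\<close>, a Cauchy-Schwarz bound on the
  column of \<open>\<rho>\<close> at \<open>|0\<^sup>n\<rangle>\<close>.\<close>

section \<open>Positive semidefinite operators\<close>

definition psd_op :: "nat \<Rightarrow> (nat \<Rightarrow> nat \<Rightarrow> complex) \<Rightarrow> bool" where
  "psd_op n \<rho> \<longleftrightarrow> hermitian_op n \<rho> \<and> (\<forall>v. 0 \<le> Re (quad_form n \<rho> v))"

lemma density_matrix_imp_psd_op: "density_matrix n \<rho> \<Longrightarrow> psd_op n \<rho>"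
  by (simp add: density_matrix_def psd_op_def)

lemma psd_op_hermitian: "psd_op n \<rho> \<Longrightarrow> hermitian_op n \<rho>"
  by (simp add: psd_op_def)

lemma density_matrix_Re_trace: "density_matrix n \<rho> \<Longrightarrow> (\<Sum>i<2^n. Re (\<rho> i i)) = 1"
  by (simp add: density_matrix_def flip: Re_sum)

lemma hermitian_op_entry:
  "hermitian_op n \<rho> \<Longrightarrow> i < 2^n \<Longrightarrow> j < 2^n \<Longrightarrow> \<rho> i j = cnj (\<rho> j i)"
  unfolding hermitian_op_def by blast

definition sesq_form :: "nat \<Rightarrow> (nat \<Rightarrow> nat \<Rightarrow> complex) \<Rightarrow> (nat \<Rightarrow> complex) \<Rightarrow> (nat \<Rightarrow> complex) \<Rightarrow> complex" where
  "sesq_form n \<rho> x y = (\<Sum>i<2^n. \<Sum>j<2^n. cnj (x i) * \<rho> i j * y j)"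

lemma quad_form_eq_sesq_form: "quad_form n \<rho> v = sesq_form n \<rho> v v"
  by (simp add: quad_form_def sesq_form_def)

lemma sesq_form_add_left: "sesq_form n \<rho> (\<lambda>k. x k + y k) z = sesq_form n \<rho> x z + sesq_form n \<rho> y z"
  by (simp add: sesq_form_def algebra_simps sum.distrib)

lemma sesq_form_add_right: "sesq_form n \<rho> z (\<lambda>k. x k + y k) = sesq_form n \<rho> z x + sesq_form n \<rho> z y"
  by (simp add: sesq_form_def algebra_simps sum.distrib)

lemma sesq_form_scale:
  "sesq_form n \<rho> (\<lambda>k. c * x k) (\<lambda>k. d * y k) = cnj c * d * sesq_form n \<rho> x y"
  by (simp add: sesq_form_def sum_distrib_left algebra_simps)

lemma sesq_form_swap:
  assumes "hermitian_op n \<rho>"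
  shows "sesq_form n \<rho> y x = cnj (sesq_form n \<rho> x y)"
proof -
  have "cnj (sesq_form n \<rho> x y) = (\<Sum>i<2^n. \<Sum>j<2^n. x i * cnj (\<rho> i j) * cnj (y j))"
    by (simp add: sesq_form_def)
  also have "\<dots> = (\<Sum>i<2^n. \<Sum>j<2^n. cnj (y j) * \<rho> j i * x i)"
  proof (intro sum.cong refl)
    fix i j assume "i \<in> {..<(2::nat)^n}" "j \<in> {..<(2::nat)^n}"
    then have "\<rho> j i = cnj (\<rho> i j)" by (simp add: hermitian_op_entry[OF assms, of j i])
    then show "x i * cnj (\<rho> i j) * cnj (y j) = cnj (y j) * \<rho> j i * x i" by simp
  qed
  also have "\<dots> = sesq_form n \<rho> y x"
    unfolding sesq_form_def by (rule sum.swap)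
  finally show ?thesis by simp
qed

lemma Re_quad_form_scale_real:
  "Re (quad_form n \<rho> (\<lambda>x. complex_of_real c * v x)) = c\<^sup>2 * Re (quad_form n \<rho> v)"
  using sesq_form_scale[of n \<rho> "complex_of_real c" v "complex_of_real c" v]
  by (simp add: quad_form_eq_sesq_form power2_eq_square)

lemma Re_quad_form_add:
  assumes "hermitian_op n \<rho>"
  shows "Re (quad_form n \<rho> (\<lambda>k. x k + y k))
           = Re (quad_form n \<rho> x) + Re (quad_form n \<rho> y) + 2 * Re (sesq_form n \<rho> x y)"
  using sesq_form_swap[OF assms, of x y]
  by (simp add: quad_form_eq_sesq_form sesq_form_add_left sesq_form_add_right)

lemma nonneg_quadratic_imp_le:
  fixes A C m :: real
  assumes "\<And>t. 0 \<le> A + t\<^sup>2 * m * C - 2 * t * m" and "0 \<le> m" "0 \<le> A" "0 \<le> C"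
  shows "m \<le> A * C"
proof -
  consider "m = 0" | "0 < m" "C = 0" | "0 < C"
    using assms(2,4) by linarith
  then show ?thesis
  proof cases
    case 1
    then show ?thesis using assms(3,4) by simp
  next
    case 2
    \<comment> \<open>the quadratic degenerates to the line \<open>A - 2 t m\<close>, negative for large \<open>t\<close>\<close>
    then show ?thesis using assms(1)[of "(A + 1) / (2 * m)"] by (simp add: field_simps)
  next
    case 3
    then show ?thesis
      using assms(1)[of "1 / C"] by (simp add: field_simps power2_eq_square)
  qed
qed

lemma sesq_form_Cauchy_Schwarz:
  assumes "psd_op n \<rho>"
  shows "(cmod (sesq_form n \<rho> x y))\<^sup>2 \<le> Re (quad_form n \<rho> x) * Re (quad_form n \<rho> y)"
proof -
  define b where "b = sesq_form n \<rho> x y"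
  have herm: "hermitian_op n \<rho>" and psd: "\<And>v. 0 \<le> Re (quad_form n \<rho> v)"
    using assms by (auto simp: psd_op_def)
  have b_sq: "b * cnj b = complex_of_real ((cmod b)\<^sup>2)"
    using complex_norm_square[of b] by simp
  have quadratic_nonneg:
    "0 \<le> Re (quad_form n \<rho> x) + t\<^sup>2 * (cmod b)\<^sup>2 * Re (quad_form n \<rho> y) - 2 * t * (cmod b)\<^sup>2"
    for t :: real
  proof -
    define \<mu> where "\<mu> = - (complex_of_real t * cnj b)"
    have "0 \<le> Re (quad_form n \<rho> (\<lambda>k. x k + \<mu> * y k))" by (rule psd)
    also have "\<dots> = Re (quad_form n \<rho> x) + Re (cnj \<mu> * \<mu> * quad_form n \<rho> y) + 2 * Re (\<mu> * b)"
      unfolding Re_quad_form_add[OF herm]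
      using sesq_form_scale[of n \<rho> \<mu> y \<mu> y] sesq_form_scale[of n \<rho> 1 x \<mu> y]
      by (simp add: quad_form_eq_sesq_form b_def)
    also have "cnj \<mu> * \<mu> = complex_of_real (t\<^sup>2 * (cmod b)\<^sup>2)"
      using b_sq by (simp add: \<mu>_def algebra_simps power2_eq_square)
    also have "\<mu> * b = complex_of_real (- t * (cmod b)\<^sup>2)"
      using b_sq by (simp add: \<mu>_def mult.commute mult.left_commute)
    finally show ?thesis by (simp add: algebra_simps)
  qed
  show ?thesis
    unfolding b_def[symmetric]
    by (rule nonneg_quadratic_imp_le[OF quadratic_nonneg]) (simp_all add: psd)
qed

text \<open>A weighted form of \<open>|u + r|\<^sup>2 \<ge> (1 - t)|u|\<^sup>2 - (1/t - 1)|r|\<^sup>2\<close>, obtained from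
  positivity at \<open>t u + r\<close>; multiplied through by \<open>t\<close> to avoid a division.\<close>

lemma psd_quad_form_add_lower:
  assumes "psd_op n \<rho>" and "0 \<le> t"
  shows "t * (1 - t) * Re (quad_form n \<rho> u) - (1 - t) * Re (quad_form n \<rho> r)
           \<le> t * Re (quad_form n \<rho> (\<lambda>k. u k + r k))"
proof -
  have herm: "hermitian_op n \<rho>" using assms(1) by (simp add: psd_op_def)
  have "sesq_form n \<rho> (\<lambda>k. complex_of_real t * u k) r = complex_of_real t * sesq_form n \<rho> u r"
    using sesq_form_scale[of n \<rho> "complex_of_real t" u 1 r] by simp
  moreover have "0 \<le> Re (quad_form n \<rho> (\<lambda>k. complex_of_real t * u k + r k))"
    using assms(1) by (simp add: psd_op_def)
  ultimately have "0 \<le> t\<^sup>2 * Re (quad_form n \<rho> u) + Re (quad_form n \<rho> r) + 2 * t * Re (sesq_form n \<rho> u r)"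
    using Re_quad_form_add[OF herm, of "\<lambda>k. complex_of_real t * u k" r]
    by (simp add: Re_quad_form_scale_real)
  then show ?thesis
    unfolding Re_quad_form_add[OF herm] using assms(2) by (simp add: algebra_simps power2_eq_square)
qed

section \<open>Matrix entries of positive operators\<close>

definition basis_vec :: "nat \<Rightarrow> nat \<Rightarrow> complex" where
  "basis_vec i k = (if k = i then 1 else 0)"

lemma sesq_form_basis_left:
  "i < 2^n \<Longrightarrow> sesq_form n \<rho> (basis_vec i) y = (\<Sum>j<2^n. \<rho> i j * y j)"
  by (simp add: sesq_form_def basis_vec_def if_distrib if_distribR sum.If_cases)

lemma sesq_form_basis_right:
  "j < 2^n \<Longrightarrow> sesq_form n \<rho> x (basis_vec j) = (\<Sum>i<2^n. cnj (x i) * \<rho> i j)"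
  by (simp add: sesq_form_def basis_vec_def if_distrib if_distribR sum.If_cases)

lemma sesq_form_basis:
  "i < 2^n \<Longrightarrow> j < 2^n \<Longrightarrow> sesq_form n \<rho> (basis_vec i) (basis_vec j) = \<rho> i j"
  by (simp add: sesq_form_basis_left basis_vec_def if_distrib if_distribR sum.If_cases)

lemma quad_form_basis: "i < 2^n \<Longrightarrow> quad_form n \<rho> (basis_vec i) = \<rho> i i"
  by (simp add: quad_form_eq_sesq_form sesq_form_basis)

lemma psd_op_diag_nonneg:
  assumes "psd_op n \<rho>" "i < 2^n"
  shows "0 \<le> Re (\<rho> i i)"
  using assms(1) quad_form_basis[OF assms(2), of \<rho>] unfolding psd_op_def by metis

lemma psd_op_diag_le_trace:
  assumes "psd_op n \<rho>" "i < 2^n"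
  shows "Re (\<rho> i i) \<le> (\<Sum>k<2^n. Re (\<rho> k k))"
  using assms(2) psd_op_diag_nonneg[OF assms(1)] by (intro member_le_sum) auto

lemma psd_op_entry_bound:
  assumes "psd_op n \<rho>" "i < 2^n" "j < 2^n"
  shows "cmod (\<rho> i j) \<le> sqrt (Re (\<rho> i i)) * sqrt (Re (\<rho> j j))"
proof -
  have "(cmod (\<rho> i j))\<^sup>2 \<le> Re (\<rho> i i) * Re (\<rho> j j)"
    using sesq_form_Cauchy_Schwarz[OF assms(1), of "basis_vec i" "basis_vec j"] assms(2,3)
    by (simp add: sesq_form_basis quad_form_basis)
  then show ?thesis by (simp add: real_le_rsqrt flip: real_sqrt_mult)
qed

lemma psd_op_quad_form_le:
  assumes "psd_op n \<rho>"
  shows "Re (quad_form n \<rho> x) \<le> (\<Sum>i<2^n. Re (\<rho> i i)) * (\<Sum>i<2^n. (cmod (x i))\<^sup>2)"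
proof -
  define d where "d i = sqrt (Re (\<rho> i i))" for i
  have d_sq: "(d i)\<^sup>2 = Re (\<rho> i i)" if "i < 2^n" for i
    using psd_op_diag_nonneg[OF assms that] by (simp add: d_def)
  have "Re (quad_form n \<rho> x) \<le> (\<Sum>i<2^n. \<Sum>j<2^n. cmod (cnj (x i) * \<rho> i j * x j))"
    unfolding quad_form_def
    by (rule order_trans[OF complex_Re_le_cmod order_trans[OF norm_sum sum_mono[OF norm_sum]]])
  also have "\<dots> \<le> (\<Sum>i<2^n. \<Sum>j<2^n. (cmod (x i) * d i) * (cmod (x j) * d j))"
  proof (intro sum_mono)
    fix i j assume "i \<in> {..<(2::nat)^n}" "j \<in> {..<(2::nat)^n}"
    then have "cmod (\<rho> i j) \<le> d i * d j" using psd_op_entry_bound[OF assms] by (simp add: d_def)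
    then have "cmod (x i) * cmod (\<rho> i j) * cmod (x j) \<le> cmod (x i) * (d i * d j) * cmod (x j)"
      by (intro mult_right_mono mult_left_mono) auto
    then show "cmod (cnj (x i) * \<rho> i j * x j) \<le> (cmod (x i) * d i) * (cmod (x j) * d j)"
      by (simp add: norm_mult algebra_simps)
  qed
  also have "\<dots> = (\<Sum>i<2^n. cmod (x i) * d i)\<^sup>2"
    by (simp add: power2_eq_square sum_product)
  also have "\<dots> \<le> (\<Sum>i<2^n. (cmod (x i))\<^sup>2) * (\<Sum>i<2^n. (d i)\<^sup>2)"
    by (rule Cauchy_Schwarz_ineq_sum)
  also have "\<dots> = (\<Sum>i<2^n. Re (\<rho> i i)) * (\<Sum>i<2^n. (cmod (x i))\<^sup>2)"
    by (simp add: d_sq mult.commute)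
  finally show ?thesis .
qed

lemma psd_op_column_norm_le:
  assumes "psd_op n \<rho>" "j < 2^n"
  shows "(\<Sum>i<2^n. (cmod (\<rho> i j))\<^sup>2) \<le> (\<Sum>k<2^n. Re (\<rho> k k)) * Re (\<rho> j j)"
proof -
  define S where "S = (\<Sum>i<2^n. (cmod (\<rho> i j))\<^sup>2)"
  define T where "T = (\<Sum>k<2^n. Re (\<rho> k k))"
  have "T \<ge> 0" "S \<ge> 0"
    using psd_op_diag_nonneg[OF assms(1)] by (auto simp: T_def S_def intro: sum_nonneg)
  \<comment> \<open>the column itself, paired with \<open>|j\<rangle>\<close>, has form value \<open>S\<close>\<close>
  have "sesq_form n \<rho> (\<lambda>i. \<rho> i j) (basis_vec j) = (\<Sum>i<2^n. cnj (\<rho> i j) * \<rho> i j)"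
    by (rule sesq_form_basis_right[OF assms(2)])
  also have "\<dots> = complex_of_real S"
    unfolding S_def of_real_sum by (intro sum.cong refl) (metis complex_norm_square mult.commute)
  finally have "sesq_form n \<rho> (\<lambda>i. \<rho> i j) (basis_vec j) = complex_of_real S" .
  then have "S\<^sup>2 \<le> Re (quad_form n \<rho> (\<lambda>i. \<rho> i j)) * Re (\<rho> j j)"
    using sesq_form_Cauchy_Schwarz[OF assms(1), of "\<lambda>i. \<rho> i j" "basis_vec j"] assms(2)
    by (simp add: quad_form_basis)
  also have "\<dots> \<le> T * S * Re (\<rho> j j)"
    using psd_op_quad_form_le[OF assms(1), of "\<lambda>i. \<rho> i j"] psd_op_diag_nonneg[OF assms]
    by (simp add: T_def S_def mult_right_mono)
  finally have "S * S \<le> S * (T * Re (\<rho> j j))"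
    by (simp add: power2_eq_square algebra_simps)
  then show ?thesis
    using \<open>S \<ge> 0\<close> \<open>T \<ge> 0\<close> psd_op_diag_nonneg[OF assms]
    by (cases "S = 0") (auto simp: S_def T_def mult_le_cancel_left_pos)
qed

section \<open>Product states\<close>

definition prod_vec :: "nat \<Rightarrow> (nat \<Rightarrow> complex) \<Rightarrow> nat \<Rightarrow> complex" where
  "prod_vec n w x = (\<Prod>i<n. if bit x i then w i else 1)"

lemma pi_state_eq_prod_vec:
  "pi_state n w x = complex_of_real (1 / (\<Prod>i<n. sqrt (1 + (cmod (w i))\<^sup>2))) * prod_vec n w x"
  by (simp add: pi_state_def prod_vec_def prod_dividef)

lemma prod_vec_0: "prod_vec n w 0 = 1"
  by (simp add: prod_vec_def)

lemma prod_vec_pow2: "k < n \<Longrightarrow> prod_vec n w (2^k) = w k"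
  by (simp add: prod_vec_def bit_exp_iff prod.If_cases flip: eq_commute[of k])

lemma sum_even_odd_lessThan:
  fixes g :: "nat \<Rightarrow> 'a::comm_monoid_add"
  shows "(\<Sum>x<2*m. g x) = (\<Sum>y<m. g (2*y) + g (2*y+1))"
  by (induction m) (auto simp: add.assoc)

lemma sum_prod_bits:
  fixes f :: "nat \<Rightarrow> bool \<Rightarrow> 'a::comm_semiring_1"
  shows "(\<Sum>x::nat<2^n. \<Prod>i<n. f i (bit x i)) = (\<Prod>i<n. f i False + f i True)"
proof (induction n arbitrary: f)
  case 0 then show ?case by simp
next
  case (Suc n)
  \<comment> \<open>split off the lowest bit: \<open>x = 2 y + b\<close>\<close>
  have "(\<Sum>x::nat<2^Suc n. \<Prod>i<Suc n. f i (bit x i))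
      = (\<Sum>x::nat<2*2^n. f 0 (odd x) * (\<Prod>i<n. f (Suc i) (bit (x div 2) i)))"
    by (simp only: prod.lessThan_Suc_shift bit_0 bit_Suc power_Suc)
  also have "\<dots> = (\<Sum>y::nat<2^n. (f 0 False + f 0 True) * (\<Prod>i<n. f (Suc i) (bit y i)))"
    by (subst sum_even_odd_lessThan) (simp add: algebra_simps)
  also have "\<dots> = (f 0 False + f 0 True) * (\<Prod>i<n. f (Suc i) False + f (Suc i) True)"
    using Suc.IH[of "\<lambda>i. f (Suc i)"] by (simp flip: sum_distrib_left)
  also have "\<dots> = (\<Prod>i<Suc n. f i False + f i True)"
    by (simp only: prod.lessThan_Suc_shift)
  finally show ?case .
qed

lemma sum_norm_prod_vec: "(\<Sum>x<2^n. (cmod (prod_vec n w x))\<^sup>2) = (\<Prod>i<n. 1 + (cmod (w i))\<^sup>2)"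
proof -
  have "(\<Sum>x<2^n. (cmod (prod_vec n w x))\<^sup>2)
      = (\<Sum>x::nat<2^n. \<Prod>i<n. (\<lambda>i b. if b then (cmod (w i))\<^sup>2 else 1) i (bit x i))"
    by (auto simp: prod_vec_def prod_power_distrib intro!: sum.cong prod.cong simp flip: prod_norm)
  also have "\<dots> = (\<Prod>i<n. 1 + (cmod (w i))\<^sup>2)"
    by (subst sum_prod_bits) simp
  finally show ?thesis .
qed

lemma Re_quad_form_pi_state:
  "Re (quad_form n \<rho> (pi_state n w)) = Re (quad_form n \<rho> (prod_vec n w)) / (\<Prod>i<n. 1 + (cmod (w i))\<^sup>2)"
proof -
  define c where "c = (\<Prod>i<n. sqrt (1 + (cmod (w i))\<^sup>2))"
  have c_sq: "c\<^sup>2 = (\<Prod>i<n. 1 + (cmod (w i))\<^sup>2)"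
    by (simp add: c_def prod_power_distrib)
  have "pi_state n w = (\<lambda>x. complex_of_real (1 / c) * prod_vec n w x)"
    by (simp add: fun_eq_iff pi_state_eq_prod_vec c_def)
  then show ?thesis
    unfolding \<open>pi_state n w = _\<close> Re_quad_form_scale_real using c_sq by (simp add: power_divide)
qed

lemma prod_one_plus_le:
  fixes x :: "nat \<Rightarrow> real"
  assumes "\<forall>i<n. 0 \<le> x i" and "(\<Sum>i<n. x i) \<le> 1"
  shows "(\<Prod>i<n. 1 + x i) \<le> 1 + (\<Sum>i<n. x i) + (\<Sum>i<n. x i)\<^sup>2"
  using assms
proof (induction n)
  case 0 then show ?case by simp
next
  case (Suc n)
  define S where "S = (\<Sum>i<n. x i)"
  have xn: "0 \<le> x n" and "0 \<le> S" and "S + x n \<le> 1"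
    using Suc.prems by (auto simp: S_def intro: sum_nonneg)
  then have "(\<Prod>i<n. 1 + x i) * (1 + x n) \<le> (1 + S + S\<^sup>2) * (1 + x n)"
    using Suc by (intro mult_right_mono) (auto simp: S_def)
  \<comment> \<open>the new cubic term \<open>S\<^sup>2 x\<^sub>n\<close> is absorbed by the new cross term \<open>S x\<^sub>n\<close> since \<open>S \<le> 1\<close>\<close>
  also have "\<dots> \<le> 1 + (S + x n) + (S + x n)\<^sup>2"
    using mult_right_mono[OF mult_left_le[of S S] xn] mult_nonneg_nonneg[OF xn xn]
      \<open>0 \<le> S\<close> \<open>S + x n \<le> 1\<close> xn
    by (simp add: algebra_simps power2_eq_square, linarith)
  finally show ?case by (simp add: S_def)
qed

section \<open>The first two excitation levels\<close>

definition single_exc :: "nat \<Rightarrow> (nat \<Rightarrow> complex) \<Rightarrow> nat \<Rightarrow> complex" where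
  "single_exc n w x = (\<Sum>i<n. if x = 2^i then w i else 0)"

lemma sum_pow2_delta:
  "(\<Sum>x<2^n. \<Sum>i<n. if (x::nat) = 2^i then f i else 0) = (\<Sum>i<n. f i :: 'a::comm_monoid_add)"
  by (subst sum.swap) simp

lemma single_exc_pow2: "k < n \<Longrightarrow> single_exc n w (2^k) = w k"
  by (simp add: single_exc_def sum.If_cases flip: eq_commute[of k])

lemma single_exc_other: "\<forall>k<n. x \<noteq> 2^k \<Longrightarrow> single_exc n w x = 0"
  by (simp add: single_exc_def)

lemma sum_mult_single_exc:
  "(\<Sum>x<2^n. g x * single_exc n w x) = (\<Sum>i<n. g (2^i) * w i)"
  unfolding single_exc_def sum_distrib_left
  by (subst sum_pow2_delta[symmetric]) (auto intro!: sum.cong)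

lemma sum_norm_single_exc: "(\<Sum>x<2^n. (cmod (single_exc n w x))\<^sup>2) = (\<Sum>i<n. (cmod (w i))\<^sup>2)"
proof -
  have "(cmod (single_exc n w x))\<^sup>2 = (\<Sum>i<n. if x = 2^i then (cmod (w i))\<^sup>2 else 0)" for x :: nat
    by (cases "\<exists>k<n. x = 2^k")
       (auto simp: single_exc_pow2 single_exc_other sum.If_cases)
  then show ?thesis by (simp add: sum_pow2_delta)
qed

lemma sum_norm_prod_vec_remainder:
  "(\<Sum>x<2^n. (cmod (prod_vec n w x - basis_vec 0 x - single_exc n w x))\<^sup>2)
     = (\<Prod>i<n. 1 + (cmod (w i))\<^sup>2) - 1 - (\<Sum>i<n. (cmod (w i))\<^sup>2)"
proof -
  have "(cmod (prod_vec n w x))\<^sup>2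
          = (cmod (prod_vec n w x - basis_vec 0 x - single_exc n w x))\<^sup>2
            + (cmod (basis_vec 0 x))\<^sup>2 + (cmod (single_exc n w x))\<^sup>2" for x :: nat
  proof -
    consider "x = 0" | k where "k < n" "x = 2^k" | "x \<noteq> 0" "\<forall>k<n. x \<noteq> 2^k" by blast
    then show ?thesis
      by cases (auto simp: prod_vec_0 prod_vec_pow2 single_exc_pow2 single_exc_other basis_vec_def)
  qed
  then have "(\<Sum>x<2^n. (cmod (prod_vec n w x))\<^sup>2)
      = (\<Sum>x<2^n. (cmod (prod_vec n w x - basis_vec 0 x - single_exc n w x))\<^sup>2)
        + (\<Sum>x<2^n. (cmod (basis_vec 0 x))\<^sup>2) + (\<Sum>x<2^n. (cmod (single_exc n w x))\<^sup>2)"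
    by (simp add: sum.distrib)
  moreover have "(\<Sum>x<(2::nat)^n. (cmod (basis_vec 0 x))\<^sup>2) = (\<Sum>x<(2::nat)^n. if x = 0 then 1 else 0)"
    by (intro sum.cong) (auto simp: basis_vec_def)
  ultimately show ?thesis
    by (simp add: sum_norm_prod_vec sum_norm_single_exc)
qed

lemma Re_quad_form_low_levels_ge:
  assumes "psd_op n \<rho>"
  shows "Re (\<rho> 0 0) + 2 * Re (\<Sum>i<n. \<rho> 0 (2^i) * w i)
           \<le> Re (quad_form n \<rho> (\<lambda>x. basis_vec 0 x + single_exc n w x))"
  using assms
  by (simp add: Re_quad_form_add psd_op_def quad_form_basis sesq_form_basis_left
      sum_mult_single_exc)

lemma Re_quad_form_pi_state_ge:
  assumes psd: "psd_op n \<rho>" and tr: "(\<Sum>i<2^n. Re (\<rho> i i)) = 1"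
    and s_eq: "s = (\<Sum>i<n. (cmod (w i))\<^sup>2)" and s_small: "s \<le> 1/25"
    and gain: "5 * s \<le> Re (\<Sum>i<n. \<rho> 0 (2^i) * w i)"
  shows "Re (\<rho> 0 0) + 5 * s \<le> Re (quad_form n \<rho> (pi_state n w))"
proof -
  define p where "p = Re (\<rho> 0 0)"
  define N where "N = (\<Prod>i<n. 1 + (cmod (w i))\<^sup>2)"
  define u where "u x = basis_vec 0 x + single_exc n w x" for x
  define r where "r x = prod_vec n w x - basis_vec 0 x - single_exc n w x" for x
  have "0 \<le> s" by (simp add: s_eq sum_nonneg)
  have "0 \<le> p" using psd_op_diag_nonneg[OF psd] by (simp add: p_def)
  have "p \<le> 1"
    using psd_op_diag_le_trace[OF psd, of 0] tr by (simp add: p_def)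
  have N_le: "N \<le> 1 + s + s\<^sup>2"
    unfolding N_def s_eq by (rule prod_one_plus_le) (use s_small in \<open>auto simp: s_eq\<close>)
  have "0 < N" by (simp add: N_def prod_pos add_pos_nonneg)
  have Qu: "p + 10 * s \<le> Re (quad_form n \<rho> u)"
    using Re_quad_form_low_levels_ge[OF psd, of w] gain by (simp add: u_def[abs_def] p_def)
  have Qr: "Re (quad_form n \<rho> r) \<le> s\<^sup>2"
    using psd_op_quad_form_le[OF psd, of r] sum_norm_prod_vec_remainder[of n w] tr N_le
    by (simp add: r_def N_def s_eq)
  define V where "V = Re (quad_form n \<rho> (prod_vec n w))"
  have V_eq: "prod_vec n w = (\<lambda>x. u x + r x)" by (simp add: u_def r_def fun_eq_iff)
  have V_ge: "(1 - s) * (p + 9 * s) \<le> V"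
  proof (cases "s = 0")
    case True
    then have "Re (quad_form n \<rho> r) = 0"
      using Qr psd by (simp add: psd_op_def order_antisym)
    then have "sesq_form n \<rho> u r = 0"
      using sesq_form_Cauchy_Schwarz[OF psd, of u r] by simp
    then show ?thesis
      using Qu True \<open>Re (quad_form n \<rho> r) = 0\<close> psd
      by (simp add: V_def V_eq Re_quad_form_add psd_op_def)
  next
    case False
    have "s * (1 - s) * (p + 10 * s) \<le> s * (1 - s) * Re (quad_form n \<rho> u)"
      using Qu \<open>0 \<le> s\<close> s_small by (intro mult_left_mono) auto
    then have "s * ((1 - s) * (p + 9 * s)) \<le> s * (1 - s) * Re (quad_form n \<rho> u) - (1 - s) * s\<^sup>2"
      by (simp add: algebra_simps power2_eq_square)
    also have "\<dots> \<le> s * V"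
      using psd_quad_form_add_lower[OF psd \<open>0 \<le> s\<close>, of u r] mult_left_mono[OF Qr, of "1 - s"] s_small
      unfolding V_def V_eq by linarith
    finally show ?thesis using False \<open>0 \<le> s\<close> by simp
  qed
  have "(p + 5 * s) * N \<le> (p + 5 * s) * (1 + s + s\<^sup>2)"
    using N_le \<open>0 \<le> p\<close> \<open>0 \<le> s\<close> by (intro mult_left_mono) auto
  also have "\<dots> \<le> (1 - s) * (p + 9 * s)"
  proof -
    have "(1 - s) * (p + 9 * s) - (p + 5 * s) * (1 + s + s\<^sup>2) = 4 * s - 14 * s\<^sup>2 - 5 * s ^ 3 - p * (2 * s + s\<^sup>2)"
      by (simp add: algebra_simps power2_eq_square power3_eq_cube)
    moreover have "p * (2 * s + s\<^sup>2) \<le> 2 * s + s\<^sup>2"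
      using mult_right_mono[OF \<open>p \<le> 1\<close>, of "2 * s + s\<^sup>2"] \<open>0 \<le> s\<close> by simp
    moreover have "s\<^sup>2 \<le> s / 25"
      using mult_left_mono[OF s_small \<open>0 \<le> s\<close>] by (simp add: power2_eq_square)
    moreover have "s ^ 3 \<le> s\<^sup>2"
      using \<open>0 \<le> s\<close> s_small by (intro power_decreasing) auto
    ultimately show ?thesis using \<open>0 \<le> s\<close> by linarith
  qed
  finally show ?thesis
    using V_ge \<open>0 < N\<close> by (simp add: Re_quad_form_pi_state V_def N_def p_def pos_le_divide_eq)
qed

section \<open>The vector condition\<close>

lemma vnorm_eq_L2_set: "vnorm n v = L2_set (\<lambda>i. cmod (v i)) {..<n}"
  by (simp add: vnorm_def L2_set_def)

lemma vnorm_sq: "(vnorm n v)\<^sup>2 = (\<Sum>i<n. (cmod (v i))\<^sup>2)"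
  by (simp add: vnorm_def sum_nonneg)

lemma vnorm_le_twice:
  assumes "vnorm n (\<lambda>i. a i - z i) \<le> vnorm n a / 2"
  shows "vnorm n a \<le> 2 * vnorm n z"
proof -
  have "vnorm n a \<le> vnorm n (\<lambda>i. a i - z i) + vnorm n z"
    unfolding vnorm_eq_L2_set
    by (rule order_trans[OF L2_set_mono L2_set_triangle_ineq]) (metis diff_add_cancel norm_triangle_ineq, simp)
  then show ?thesis using assms by linarith
qed

lemma Re_inner_ge:
  assumes "vnorm n (\<lambda>i. a i - z i) \<le> vnorm n a / 2"
  shows "(vnorm n a)\<^sup>2 / 2 \<le> Re (\<Sum>i<n. cnj (z i) * a i)"
proof -
  have term_ge: "(cmod (a i))\<^sup>2 - cmod (a i - z i) * cmod (a i) \<le> Re (cnj (z i) * a i)" for i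
  proof -
    have "cnj (z i) * a i = cnj (a i) * a i - cnj (a i - z i) * a i"
      by (simp add: algebra_simps)
    moreover have "Re (cnj (a i) * a i) = (cmod (a i))\<^sup>2"
      by (metis complex_norm_square Re_complex_of_real mult.commute)
    moreover have "Re (cnj (a i - z i) * a i) \<le> cmod (a i - z i) * cmod (a i)"
      using complex_Re_le_cmod[of "cnj (a i - z i) * a i"] by (simp only: norm_mult complex_mod_cnj)
    ultimately show ?thesis by simp
  qed
  have "(\<Sum>i<n. cmod (a i - z i) * cmod (a i)) \<le> vnorm n (\<lambda>i. a i - z i) * vnorm n a"
    unfolding vnorm_eq_L2_set
    using L2_set_mult_ineq[of "\<lambda>i. cmod (a i - z i)" "\<lambda>i. cmod (a i)" "{..<n}"] by simp
  also have "\<dots> \<le> vnorm n a / 2 * vnorm n a"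
    by (rule mult_right_mono[OF assms]) (simp add: vnorm_def sum_nonneg)
  also have "\<dots> = (\<Sum>i<n. (cmod (a i))\<^sup>2) / 2"
    unfolding vnorm_sq[symmetric] by (simp add: power2_eq_square)
  finally have "(vnorm n a)\<^sup>2 / 2 \<le> (\<Sum>i<n. (cmod (a i))\<^sup>2 - cmod (a i - z i) * cmod (a i))"
    by (simp add: sum_subtractf vnorm_sq)
  also have "\<dots> \<le> Re (\<Sum>i<n. cnj (z i) * a i)"
    unfolding Re_sum by (intro sum_mono term_ge)
  finally show ?thesis .
qed

lemma density_matrix_vnorm_e_idx_column:
  assumes "density_matrix n \<rho>"
  shows "vnorm n (\<lambda>i. \<rho> (e_idx i) 0) \<le> 1"
proof -
  have psd: "psd_op n \<rho>" using assms by (rule density_matrix_imp_psd_op)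
  have "(\<Sum>i<n. (cmod (\<rho> (2^i) 0))\<^sup>2) = (\<Sum>x\<in>(\<lambda>i. 2^i) ` {..<n}. (cmod (\<rho> x 0))\<^sup>2)"
    by (simp add: sum.reindex inj_on_def)
  also have "\<dots> \<le> (\<Sum>x<2^n. (cmod (\<rho> x 0))\<^sup>2)"
    by (rule sum_mono2) auto
  also have "\<dots> \<le> Re (\<rho> 0 0)"
    using psd_op_column_norm_le[OF psd, of 0] density_matrix_Re_trace[OF assms] by simp
  also have "\<dots> \<le> 1"
    using psd_op_diag_le_trace[OF psd, of 0] density_matrix_Re_trace[OF assms] by simp
  finally show ?thesis by (simp add: vnorm_def e_idx_def)
qed

theorem theorem4p9:
  fixes n :: nat and \<rho> :: "nat \<Rightarrow> nat \<Rightarrow> complex" and a z :: "nat \<Rightarrow> complex"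
  assumes "density_matrix n \<rho>"
    and "\<forall>i<n. z i = \<rho> (e_idx i) 0"
    and "vnorm n (\<lambda>i. a i - z i) \<le> vnorm n a / 2"
  shows "Re (quad_form n \<rho> (pi_state n (\<lambda>i. a i / 10)))
           \<ge> Re (\<rho> 0 0) + (vnorm n a)\<^sup>2 / 20"
proof -
  define s where "s = (\<Sum>i<n. (cmod (a i / 10))\<^sup>2)"
  have psd: "psd_op n \<rho>" using assms(1) by (rule density_matrix_imp_psd_op)
  have s_eq: "s = (vnorm n a)\<^sup>2 / 100"
    by (simp add: s_def vnorm_sq norm_divide power_divide sum_divide_distrib)
  have "vnorm n z = vnorm n (\<lambda>i. \<rho> (e_idx i) 0)"
    using assms(2) by (simp add: vnorm_def)
  then have "vnorm n a \<le> 2"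
    using vnorm_le_twice[OF assms(3)] density_matrix_vnorm_e_idx_column[OF assms(1)] by simp
  then have "(vnorm n a)\<^sup>2 \<le> 2\<^sup>2"
    by (rule power_mono) (simp add: vnorm_def sum_nonneg)
  then have "s \<le> 1/25"
    by (simp add: s_eq)
  moreover have "5 * s \<le> Re (\<Sum>i<n. \<rho> 0 (2^i) * (a i / 10))"
  proof -
    have "\<rho> 0 (2^i) = cnj (z i)" if "i < n" for i
      using hermitian_op_entry[OF psd_op_hermitian[OF psd], of 0 "2^i"] assms(2) that
      by (simp add: e_idx_def)
    then have "(\<Sum>i<n. \<rho> 0 (2^i) * (a i / 10)) = (\<Sum>i<n. cnj (z i) * a i) / 10"
      by (simp add: sum_divide_distrib)
    then have "Re (\<Sum>i<n. \<rho> 0 (2^i) * (a i / 10)) = Re (\<Sum>i<n. cnj (z i) * a i) / 10"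
      by (simp only: Re_divide_numeral)
    then show ?thesis using Re_inner_ge[OF assms(3)] s_eq by linarith
  qed
  ultimately have "Re (\<rho> 0 0) + 5 * s \<le> Re (quad_form n \<rho> (pi_state n (\<lambda>i. a i / 10)))"
    by (rule Re_quad_form_pi_state_ge[OF psd density_matrix_Re_trace[OF assms(1)] s_def])
  then show ?thesis by (simp add: s_eq)
qed

end
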